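(* Let $r>0$, let $U=\{(x_1,\dots,x_n)\in\mathbb{R}^n:|x_1|+\cdots+|x_n|\le r\}$, and let $\Lambda\subset\mathbb{R}^n$ be the lattice generated by $d_1\mathbf e_1,\dots,d_n\mathbf e_n$ with all $d_i>0$ ($\mathbf e_i$ the standard unit vectors). For $S\subseteq\{1,\dots,n\}$ let $d_S=\sum_{i\in S}d_i$. Then $$\#(\Lambda\cap U)\ge\frac1{n!\,d_1\cdots d_n}\sum_{S\subseteq\{1,\dots,n\},\ d_S\le r}(r-d_S)^n.$$ *)

theory Defs
  imports "HOL-Analysis.Analysis"
begin

end

theory Submission
  imports Defs
begin

text \<open>The half-open boxes \<open>\<Prod>\<^sub>i [m\<^sub>i d\<^sub>i, (m\<^sub>i + 1) d\<^sub>i)\<close>, one for each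
  \<open>m \<in> \<nat>\<^sup>n\<close> with \<open>\<Sum>\<^sub>i m\<^sub>i d\<^sub>i \<le> t\<close>, cover the standard simplex of size \<open>t\<close>; comparing volumes,
  there are at least \<open>t\<^sup>n / (n! d\<^sub>1\<cdots>d\<^sub>n)\<close> such \<open>m\<close>. For a sign pattern \<open>S\<close> with
  \<open>d\<^sub>S \<le> r\<close>, replacing \<open>m\<^sub>i\<close> by \<open>-(m\<^sub>i + 1)\<close> for \<open>i \<in> S\<close> maps the \<open>m\<close> for \<open>t = r - d\<^sub>S\<close>
  injectively into \<open>\<Lambda> \<inter> U\<close>, and the images for different \<open>S\<close> are disjoint because \<open>S\<close> is
  recovered as the set of negative coordinates.\<close>

definition weighted_nat_points :: "('n::finite \<Rightarrow> real) \<Rightarrow> real \<Rightarrow> ('n \<Rightarrow> nat) set" where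
  "weighted_nat_points d t = {m. (\<Sum>i\<in>UNIV. real (m i) * d i) \<le> t}"

definition diag_lattice :: "('n::finite \<Rightarrow> real) \<Rightarrow> (real^'n) set" where
  "diag_lattice d = {x. \<forall>i. \<exists>k::int. x $ i = of_int k * d i}"

definition l1_cball :: "real \<Rightarrow> (real^'n::finite) set" where
  "l1_cball r = {x. (\<Sum>i\<in>UNIV. \<bar>x $ i\<bar>) \<le> r}"

lemma finite_weighted_nat_points:
  assumes d: "\<And>i. d i > 0"
  shows "finite (weighted_nat_points d t)"
proof (rule finite_subset)
  show "weighted_nat_points d t \<subseteq> Pi\<^sub>E UNIV (\<lambda>i. {0..nat \<lfloor>t / d i\<rfloor>})"
  proof
    fix m assume "m \<in> weighted_nat_points d t"
    hence sum_le: "(\<Sum>i\<in>UNIV. real (m i) * d i) \<le> t"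
      by (simp add: weighted_nat_points_def)
    have "m i \<le> nat \<lfloor>t / d i\<rfloor>" for i
    proof -
      have "real (m i) * d i \<le> (\<Sum>i\<in>UNIV. real (m i) * d i)"
        using d by (intro member_le_sum) (simp_all add: less_imp_le)
      hence "real (m i) \<le> t / d i"
        using sum_le d[of i] by (simp add: field_simps)
      thus ?thesis by linarith
    qed
    thus "m \<in> Pi\<^sub>E UNIV (\<lambda>i. {0..nat \<lfloor>t / d i\<rfloor>})" by auto
  qed
qed (intro finite_PiE; auto)

lemma nat_floor_divide_bounds:
  fixes x d :: real
  assumes "0 \<le> x" "0 < d"
  shows "real (nat \<lfloor>x / d\<rfloor>) * d \<le> x" and "x < (real (nat \<lfloor>x / d\<rfloor>) + 1) * d"
proof -
  have "real (nat \<lfloor>x / d\<rfloor>) = of_int \<lfloor>x / d\<rfloor>"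
    using assms by simp
  moreover have "of_int \<lfloor>x / d\<rfloor> * d \<le> x"
    using pos_le_divide_eq[OF assms(2)] by (metis of_int_floor_le)
  moreover have "x < (of_int \<lfloor>x / d\<rfloor> + 1) * d"
    using pos_divide_less_eq[OF assms(2)] by (metis real_of_int_floor_add_one_gt)
  ultimately show "real (nat \<lfloor>x / d\<rfloor>) * d \<le> x" "x < (real (nat \<lfloor>x / d\<rfloor>) + 1) * d"
    by simp_all
qed

lemma std_simplex_subset_UN_boxes:
  assumes d: "\<And>i. d i > 0"
  shows "{x::'n::finite \<Rightarrow> real. (\<forall>i\<in>UNIV. 0 \<le> x i) \<and> sum x UNIV \<le> t}
    \<subseteq> (\<Union>m\<in>weighted_nat_points d t. Pi\<^sub>E UNIV (\<lambda>i. {real (m i) * d i ..< (real (m i) + 1) * d i}))"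
proof
  fix x :: "'n \<Rightarrow> real"
  assume "x \<in> {x. (\<forall>i\<in>UNIV. 0 \<le> x i) \<and> sum x UNIV \<le> t}"
  hence x_nonneg: "\<And>i. 0 \<le> x i" and sum_le: "sum x UNIV \<le> t" by auto
  define m where "m i = nat \<lfloor>x i / d i\<rfloor>" for i
  have lower: "real (m i) * d i \<le> x i" and upper: "x i < (real (m i) + 1) * d i" for i
    unfolding m_def using nat_floor_divide_bounds[OF x_nonneg d] by blast+
  have "(\<Sum>i\<in>UNIV. real (m i) * d i) \<le> t"
    using sum_mono[of UNIV "\<lambda>i. real (m i) * d i" x] lower sum_le by force
  hence "m \<in> weighted_nat_points d t" by (simp add: weighted_nat_points_def)
  moreover have "x \<in> Pi\<^sub>E UNIV (\<lambda>i. {real (m i) * d i ..< (real (m i) + 1) * d i})"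
    using lower upper by auto
  ultimately show "x \<in> (\<Union>m\<in>weighted_nat_points d t.
      Pi\<^sub>E UNIV (\<lambda>i. {real (m i) * d i ..< (real (m i) + 1) * d i}))" by blast
qed

lemma emeasure_PiM_lborel_Ico_box:
  assumes "finite I" "\<And>i. i \<in> I \<Longrightarrow> a i \<le> b i"
  shows "emeasure (Pi\<^sub>M I (\<lambda>_. lborel)) (Pi\<^sub>E I (\<lambda>i. {a i ..< b i})) = ennreal (\<Prod>i\<in>I. b i - a i)"
proof -
  interpret product_sigma_finite "\<lambda>_. lborel" by standard
  have "emeasure (Pi\<^sub>M I (\<lambda>_. lborel)) (Pi\<^sub>E I (\<lambda>i. {a i ..< b i}))
      = (\<Prod>i\<in>I. emeasure lborel {a i ..< b i})"
    using assms(1) by (intro emeasure_PiM) auto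
  also have "\<dots> = (\<Prod>i\<in>I. ennreal (b i - a i))"
    using assms(2) by (intro prod.cong refl) simp
  also have "\<dots> = ennreal (\<Prod>i\<in>I. b i - a i)"
    using assms(2) by (intro prod_ennreal) simp
  finally show ?thesis .
qed

lemma std_simplex_volume_le_card_weighted_nat_points:
  fixes d :: "'n::finite \<Rightarrow> real"
  assumes t: "t \<ge> 0" and d: "\<And>i. d i > 0"
  shows "t ^ CARD('n) / fact CARD('n) \<le> real (card (weighted_nat_points d t)) * (\<Prod>i\<in>UNIV. d i)"
proof -
  let ?M = "Pi\<^sub>M (UNIV :: 'n set) (\<lambda>_. lborel)"
  let ?N = "weighted_nat_points d t"
  define box where "box m = Pi\<^sub>E UNIV (\<lambda>i. {real (m i) * d i ..< (real (m i) + 1) * d i})"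
    for m :: "'n \<Rightarrow> nat"
  have fin: "finite ?N"
    using d by (rule finite_weighted_nat_points)
  have box_sets: "box m \<in> sets ?M" for m
    unfolding box_def by (intro sets_PiM_I_finite) auto
  have box_measure: "emeasure ?M (box m) = ennreal (\<Prod>i\<in>UNIV. d i)" for m
    unfolding box_def using d
    by (subst emeasure_PiM_lborel_Ico_box) (auto simp: algebra_simps less_imp_le)
  have "ennreal (t ^ CARD('n) / fact CARD('n))
      = emeasure ?M ({x. (\<forall>i\<in>UNIV. 0 \<le> x i) \<and> sum x UNIV \<le> t} \<inter> space ?M)"
    using emeasure_std_simplex_aux[of "UNIV :: 'n set" t] t by simp
  also have "\<dots> \<le> emeasure ?M (\<Union>m\<in>?N. box m)"
    using std_simplex_subset_UN_boxes[of d t, OF d] box_sets fin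
    unfolding box_def by (intro emeasure_mono) auto
  also have "\<dots> \<le> (\<Sum>m\<in>?N. emeasure ?M (box m))"
    using box_sets fin by (intro emeasure_subadditive_finite) auto
  also have "\<dots> = ennreal (real (card ?N) * (\<Prod>i\<in>UNIV. d i))"
    by (simp add: box_measure ennreal_of_nat_eq_real_of_nat ennreal_mult')
  finally have "ennreal (t ^ CARD('n) / fact CARD('n))
      \<le> ennreal (real (card ?N) * (\<Prod>i\<in>UNIV. d i))" .
  moreover have "0 \<le> real (card ?N) * (\<Prod>i\<in>UNIV. d i)"
    using d by (intro mult_nonneg_nonneg prod_nonneg) (auto intro: less_imp_le)
  ultimately show ?thesis by simp
qed

definition signed_lattice_point :: "('n::finite \<Rightarrow> real) \<Rightarrow> 'n set \<Rightarrow> ('n \<Rightarrow> nat) \<Rightarrow> real^'n" where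
  "signed_lattice_point d S m = (\<chi> i. (if i \<in> S then - (real (m i) + 1) else real (m i)) * d i)"

lemma signed_lattice_point_neg_iff:
  assumes "d i > 0"
  shows "signed_lattice_point d S m $ i < 0 \<longleftrightarrow> i \<in> S"
  using assms by (auto simp: signed_lattice_point_def mult_less_0_iff)

lemma signed_lattice_point_eq_iff:
  assumes d: "\<And>i. d i > 0"
  shows "signed_lattice_point d S m = signed_lattice_point d S' m' \<longleftrightarrow> S = S' \<and> m = m'"
proof
  assume eq: "signed_lattice_point d S m = signed_lattice_point d S' m'"
  have "i \<in> S \<longleftrightarrow> i \<in> S'" for i
    using signed_lattice_point_neg_iff[of d i S m] signed_lattice_point_neg_iff[of d i S' m'] d[of i] eq
    by simp
  hence "S = S'" by blast
  moreover have "m i = m' i" for i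
    using arg_cong[OF eq, of "\<lambda>x. x $ i"] d[of i] \<open>S = S'\<close>
    by (cases "i \<in> S") (auto simp: signed_lattice_point_def)
  ultimately show "S = S' \<and> m = m'" by auto
qed simp

lemma signed_lattice_point_in_diag_lattice: "signed_lattice_point d S m \<in> diag_lattice d"
  unfolding diag_lattice_def
proof (intro CollectI allI)
  fix i
  show "\<exists>k::int. signed_lattice_point d S m $ i = of_int k * d i"
    by (rule exI[of _ "if i \<in> S then - (int (m i) + 1) else int (m i)"])
      (simp add: signed_lattice_point_def)
qed

lemma l1_norm_signed_lattice_point:
  assumes "\<And>i. d i \<ge> 0"
  shows "(\<Sum>i\<in>UNIV. \<bar>signed_lattice_point d S m $ i\<bar>) = (\<Sum>i\<in>UNIV. real (m i) * d i) + sum d S"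
proof -
  have "\<bar>signed_lattice_point d S m $ i\<bar> = real (m i) * d i + (if i \<in> S then d i else 0)" for i
    using assms[of i] by (simp add: signed_lattice_point_def abs_mult distrib_right)
  thus ?thesis by (simp add: sum.distrib sum.If_cases)
qed

lemma signed_lattice_point_in_l1_cball:
  assumes "\<And>i. d i \<ge> 0" and "m \<in> weighted_nat_points d (r - sum d S)"
  shows "signed_lattice_point d S m \<in> l1_cball r"
  using assms by (simp add: l1_cball_def l1_norm_signed_lattice_point weighted_nat_points_def)

lemma finite_diag_lattice_inter_l1_cball:
  assumes d: "\<And>i. d i > 0"
  shows "finite (diag_lattice d \<inter> l1_cball r)"
proof (rule finite_subset)
  define B where "B i = \<lceil>r / d i\<rceil>" for i
  show "diag_lattice d \<inter> l1_cball r \<subseteq> (\<lambda>k. \<chi> i. of_int (k i) * d i) ` Pi\<^sub>E UNIV (\<lambda>i. {-B i..B i})"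
  proof
    fix x assume x: "x \<in> diag_lattice d \<inter> l1_cball r"
    hence "\<forall>i. \<exists>k::int. x $ i = of_int k * d i" by (simp add: diag_lattice_def)
    then obtain k :: "_ \<Rightarrow> int" where k: "\<And>i. x $ i = of_int (k i) * d i"
      by (metis choice)
    have "k i \<in> {-B i..B i}" for i
    proof -
      have "\<bar>x $ i\<bar> \<le> (\<Sum>i\<in>UNIV. \<bar>x $ i\<bar>)" by (rule member_le_sum) auto
      also have "\<dots> \<le> r" using x by (simp add: l1_cball_def)
      finally have "\<bar>of_int (k i)\<bar> * d i \<le> r" using k[of i] d[of i] by (simp add: abs_mult)
      hence "\<bar>of_int (k i)\<bar> \<le> r / d i" using d[of i] by (simp add: pos_le_divide_eq)
      hence "of_int \<bar>k i\<bar> \<le> r / d i" by simp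
      hence "\<bar>k i\<bar> \<le> B i" unfolding B_def by (simp add: le_ceiling_iff)
      thus ?thesis by auto
    qed
    hence "k \<in> Pi\<^sub>E UNIV (\<lambda>i. {-B i..B i})" by auto
    moreover have "x = (\<chi> i. of_int (k i) * d i)" using k by (simp add: vec_eq_iff)
    ultimately show "x \<in> (\<lambda>k. \<chi> i. of_int (k i) * d i) ` Pi\<^sub>E UNIV (\<lambda>i. {-B i..B i})"
      by (rule rev_image_eqI[where f = "\<lambda>k. \<chi> i. of_int (k i) * d i"])
  qed
qed (intro finite_imageI finite_PiE; simp)

lemma sum_card_weighted_nat_points_le_card:
  fixes F :: "'n::finite set set"
  assumes d: "\<And>i. d i > 0"
  shows "(\<Sum>S\<in>F. card (weighted_nat_points d (r - sum d S))) \<le> card (diag_lattice d \<inter> l1_cball r)"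
proof -
  let ?N = "\<lambda>S. weighted_nat_points d (r - sum d S)"
  let ?P = "\<lambda>S. signed_lattice_point d S ` ?N S"
  have "inj_on (signed_lattice_point d S) (?N S)" for S
    by (rule inj_onI) (simp add: signed_lattice_point_eq_iff[of d, OF d])
  hence "(\<Sum>S\<in>F. card (?N S)) = (\<Sum>S\<in>F. card (?P S))"
    by (simp add: card_image)
  also have "\<dots> = card (\<Union>S\<in>F. ?P S)"
  proof (rule card_UN_disjoint[symmetric])
    show "\<forall>S\<in>F. finite (?P S)"
      using finite_weighted_nat_points[of d, OF d] by blast
    show "\<forall>S\<in>F. \<forall>S'\<in>F. S \<noteq> S' \<longrightarrow> ?P S \<inter> ?P S' = {}"
      by (auto simp: signed_lattice_point_eq_iff[of d, OF d])
  qed simp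
  also have "\<dots> \<le> card (diag_lattice d \<inter> l1_cball r)"
  proof (intro card_mono finite_diag_lattice_inter_l1_cball[OF d])
    have "signed_lattice_point d S m \<in> diag_lattice d \<inter> l1_cball r" if "m \<in> ?N S" for S m
      using that d
      by (simp add: signed_lattice_point_in_diag_lattice signed_lattice_point_in_l1_cball less_imp_le)
    thus "(\<Union>S\<in>F. ?P S) \<subseteq> diag_lattice d \<inter> l1_cball r" by blast
  qed
  finally show ?thesis .
qed

theorem lemma2p5p3:
  fixes r :: real and d :: "'n::finite \<Rightarrow> real"
  assumes "r > 0" and "\<And>i. d i > 0"
  defines "U \<equiv> {x :: real^'n. (\<Sum>i\<in>UNIV. \<bar>x $ i\<bar>) \<le> r}"
    and "\<Lambda> \<equiv> {x :: real^'n. \<forall>i. \<exists>k::int. x $ i = of_int k * d i}"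
  shows "real (card (\<Lambda> \<inter> U)) \<ge>
    (1 / (fact CARD('n) * (\<Prod>i\<in>UNIV. d i))) *
      (\<Sum>S\<in>{S. S \<subseteq> (UNIV :: 'n set) \<and> (\<Sum>i\<in>S. d i) \<le> r}. (r - (\<Sum>i\<in>S. d i)) ^ CARD('n))"
proof -
  define F where "F = {S. S \<subseteq> (UNIV :: 'n set) \<and> (\<Sum>i\<in>S. d i) \<le> r}"
  have prod_d_pos: "(\<Prod>i\<in>UNIV. d i) > 0"
    using assms(2) by (intro prod_pos) auto
  have "(1 / (fact CARD('n) * (\<Prod>i\<in>UNIV. d i))) * (\<Sum>S\<in>F. (r - sum d S) ^ CARD('n))
      = (\<Sum>S\<in>F. (r - sum d S) ^ CARD('n) / fact CARD('n) / (\<Prod>i\<in>UNIV. d i))"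
    by (simp add: sum_divide_distrib divide_divide_eq_left)
  also have "\<dots> \<le> (\<Sum>S\<in>F. real (card (weighted_nat_points d (r - sum d S))))"
  proof (rule sum_mono)
    fix S assume "S \<in> F"
    hence "(r - sum d S) ^ CARD('n) / fact CARD('n)
        \<le> real (card (weighted_nat_points d (r - sum d S))) * (\<Prod>i\<in>UNIV. d i)"
      using assms(2) by (intro std_simplex_volume_le_card_weighted_nat_points) (auto simp: F_def)
    thus "(r - sum d S) ^ CARD('n) / fact CARD('n) / (\<Prod>i\<in>UNIV. d i)
        \<le> real (card (weighted_nat_points d (r - sum d S)))"
      using prod_d_pos by (simp add: pos_divide_le_eq mult_ac)
  qed
  also have "\<dots> \<le> real (card (diag_lattice d \<inter> l1_cball r))"
    using sum_card_weighted_nat_points_le_card[where F = F and r = r, OF assms(2)]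
    by (simp flip: of_nat_sum)
  finally show ?thesis
    by (simp add: F_def U_def \<Lambda>_def diag_lattice_def l1_cball_def)
qed

end
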